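(* Let $A\in\mathbb{R}^{n\times n}$ be nonsingular, $B\in\mathbb{R}^{n\times p}$, $C\in\mathbb{R}^{q\times n}$, and let $X_0=O$. For $k=0,1,2,\dots$ suppose that $A-X_kBB^T$ is nonsingular and that $X_{k+1}$ is the approximate solution computed by EKSM (in the sense described in the context) of the Newton–Kleinman Lyapunov equation $$(A-X_kBB^T)X+X(A-X_kBB^T)^T=-X_kBB^TX_k-C^TC ,$$ i.e. $X_{k+1}=W_{k+1}Y^{(k+1)}W_{k+1}^T$, where the columns of $W_{k+1}$ form an orthonormal basis of $\mathbf{EK}^\square_{m_{k+1}}(A-X_kBB^T,[C^T,X_kB])$ for some $m_{k+1}\ge1$, and $Y^{(k+1)}$ is a square matrix; write $X_{k+1}=S_{k+1}S_{k+1}^T$ when $Y^{(k+1)}$ is symmetric positive semidefinite. Then for every $k\ge0$, $$\mathrm{Range}(X_{k+1})\subseteq \mathbf{EK}^\square_{\bar m_{k+1}}(A,C^T)\quad(\text{equivalently }\mathrm{Range}(S_{k+1})\subseteq \mathbf{EK}^\square_{\bar m_{k+1}}(A,C^T))$$ for some integer $\bar m_{k+1}$ with $\bar m_{k+1}\le \sum_{j=1}^{k+1}m_j+2$.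
   Context: For a nonsingular $M\in\mathbb{R}^{n\times n}$ and $G\in\mathbb{R}^{n\times s}$, the block extended Krylov subspace is $\mathbf{EK}^\square_m(M,G)=\mathrm{Range}([G,M^{-1}G,MG,M^{-2}G,\dots,M^{m-1}G,M^{-m}G])$. "Solving the Lyapunov equation $MX+XM^T+GG^T=0$ by EKSM" means computing an approximate solution of the form $VYV^T$, where the columns of $V$ form an orthonormal basis of $\mathbf{EK}^\square_m(M,G)$ for some $m$ and $Y$ is a small square matrix (e.g. obtained by a Galerkin condition). *)

theory Defs
  imports "HOL-Analysis.Analysis"
begin

fun mpow :: "real^'n^'n \<Rightarrow> nat \<Rightarrow> real^'n^'n" where
  "mpow M 0 = mat 1"
| "mpow M (Suc k) = M ** mpow M k"

definition mpow_int :: "real^'n^'n \<Rightarrow> int \<Rightarrow> real^'n^'n" where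
  "mpow_int M j = (if 0 \<le> j then mpow M (nat j) else mpow (matrix_inv M) (nat (- j)))"

definition mrange :: "real^'s^'n \<Rightarrow> (real^'n) set" where
  "mrange G = {G *v x | x. True}"

text \<open>Block extended Krylov subspace
  EK_m(M,G) = Range([G, M^{-1}G, MG, M^{-2}G, ..., M^{m-1}G, M^{-m}G]),
  i.e. the span of the ranges of M^j G for j = -m, ..., m-1.\<close>
definition EK :: "nat \<Rightarrow> real^'n^'n \<Rightarrow> real^'s^'n \<Rightarrow> (real^'n) set" where
  "EK m M G = span (\<Union>j\<in>{- int m..int m - 1}. mrange (mpow_int M j ** G))"

definition hcat :: "real^'a^'n \<Rightarrow> real^'b^'n \<Rightarrow> real^('a + 'b)^'n" where
  "hcat G1 G2 = (\<chi> i j. case j of Inl a \<Rightarrow> G1 $ i $ a | Inr b \<Rightarrow> G2 $ i $ b)"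

text \<open>W Y W^T, where W has the vectors of the list ws as columns and Y is r x r
  (r = length ws), given as a function on indices.\<close>
definition WYWt :: "(real^'n) list \<Rightarrow> (nat \<Rightarrow> nat \<Rightarrow> real) \<Rightarrow> real^'n^'n" where
  "WYWt ws Y = (\<chi> a b. \<Sum>i<length ws. \<Sum>j<length ws. (ws ! i) $ a * Y i j * (ws ! j) $ b)"

definition orthonormal_basis_of :: "(real^'n) list \<Rightarrow> (real^'n) set \<Rightarrow> bool" where
  "orthonormal_basis_of ws V \<longleftrightarrow>
     (\<forall>i<length ws. \<forall>j<length ws. (ws ! i) \<bullet> (ws ! j) = (if i = j then 1 else 0))
     \<and> span (set ws) = V"

end

theory Submission
  imports Defs
begin

text \<open>Write \<open>K = A - F N\<close> with \<open>Range(F) \<subseteq> EK\<^sub>s(A, C\<^sup>T)\<close>. For \<open>r \<ge> s\<close> and \<open>v \<in> EK\<^sub>r(A, C\<^sup>T)\<close>,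
  both \<open>K v = A v - F (N v)\<close> and \<open>K\<^sup>-\<^sup>1 v = A\<^sup>-\<^sup>1 (v + F N K\<^sup>-\<^sup>1 v)\<close> lie in \<open>EK\<^sub>r\<^sub>+\<^sub>1(A, C\<^sup>T)\<close>,
  and the starting block \<open>[C\<^sup>T, F]\<close> lies in \<open>EK\<^sub>s(A, C\<^sup>T)\<close>; hence
  \<open>EK\<^sub>m(K, [C\<^sup>T, F]) \<subseteq> EK\<^sub>s\<^sub>+\<^sub>m(A, C\<^sup>T)\<close>. Applied with \<open>F = X\<^sub>k B\<close>, \<open>N = B\<^sup>T\<close>, induction on \<open>k\<close>
  gives \<open>Range(X\<^sub>k) \<subseteq> EK\<^sub>s\<^sub>k(A, C\<^sup>T)\<close> with \<open>s\<^sub>k = 1 + m\<^sub>1 + \<dots> + m\<^sub>k\<close>.\<close>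

lemma matrix_inv_inverse:
  fixes M :: "real^'n^'n"
  assumes "invertible M"
  shows "M ** matrix_inv M = mat 1 \<and> matrix_inv M ** M = mat 1"
  using assms unfolding invertible_def matrix_inv_def by (rule someI_ex)

lemma matrix_mul_mpow_int:
  fixes M :: "real^'n^'n"
  assumes "invertible M"
  shows "M ** mpow_int M j = mpow_int M (j + 1)"
proof (cases "0 \<le> j")
  case True
  then have "nat (j + 1) = Suc (nat j)" by simp
  with True show ?thesis by (simp add: mpow_int_def)
next
  case False
  then obtain d where d: "nat (- j) = Suc d" by (metis Suc_pred' neg_0_less_iff_less not_le zero_less_nat_eq)
  show ?thesis
  proof (cases "j = -1")
    case True
    then show ?thesis using matrix_inv_inverse[OF assms] by (simp add: mpow_int_def)
  next
    case False
    from d have "nat (- (j + 1)) = d" by simp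
    with \<open>\<not> 0 \<le> j\<close> False d show ?thesis
      using matrix_inv_inverse[OF assms] by (simp add: mpow_int_def matrix_mul_assoc)
  qed
qed

lemma matrix_inv_mul_mpow_int:
  fixes M :: "real^'n^'n"
  assumes "invertible M"
  shows "matrix_inv M ** mpow_int M j = mpow_int M (j - 1)"
proof -
  have "matrix_inv M ** mpow_int M j = matrix_inv M ** (M ** mpow_int M (j - 1))"
    using matrix_mul_mpow_int[OF assms, of "j - 1"] by simp
  also have "\<dots> = mpow_int M (j - 1)"
    using matrix_inv_inverse[OF assms] by (simp add: matrix_mul_assoc)
  finally show ?thesis .
qed

lemma mrange_matrix_mul_subset: "mrange (M ** N) \<subseteq> mrange M"
  unfolding mrange_def by (auto simp flip: matrix_vector_mul_assoc)

lemma matrix_vector_mult_hcat: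
  "hcat G1 G2 *v x = G1 *v (\<chi> a. x $ Inl a) + G2 *v (\<chi> b. x $ Inr b)"
proof -
  have "(hcat G1 G2 *v x) $ i = (\<Sum>j\<in>UNIV <+> UNIV. hcat G1 G2 $ i $ j * x $ j)" for i
    by (simp only: matrix_vector_mult_def vec_lambda_beta UNIV_Plus_UNIV)
  also have "\<dots> i = (G1 *v (\<chi> a. x $ Inl a) + G2 *v (\<chi> b. x $ Inr b)) $ i" for i
    by (subst sum.Plus) (simp_all add: hcat_def matrix_vector_mult_def)
  finally show ?thesis by (simp add: vec_eq_iff)
qed

lemma matrix_vector_mult_WYWt:
  "WYWt ws Y *v x = (\<Sum>i<length ws. (\<Sum>j<length ws. Y i j * (ws ! j \<bullet> x)) *\<^sub>R ws ! i)"
proof -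
  have "(WYWt ws Y *v x) $ a
      = (\<Sum>b\<in>UNIV. \<Sum>i<length ws. \<Sum>j<length ws. ws ! i $ a * Y i j * ws ! j $ b * x $ b)" for a
    by (simp add: WYWt_def matrix_vector_mult_def sum_distrib_right)
  also have "\<dots> a
      = (\<Sum>i<length ws. \<Sum>j<length ws. \<Sum>b\<in>UNIV. ws ! i $ a * Y i j * ws ! j $ b * x $ b)" for a
    by (rule trans[OF sum.swap], rule sum.cong[OF refl], rule sum.swap)
  finally show ?thesis
    by (simp add: vec_eq_iff inner_vec_def sum_component sum_distrib_left sum_distrib_right mult_ac)
qed

lemma mrange_WYWt_subset_span: "mrange (WYWt ws Y) \<subseteq> span (set ws)"
  unfolding mrange_def matrix_vector_mult_WYWt
  by clarify (intro span_sum span_mul span_base, simp)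

lemma subspace_EK: "subspace (EK m M G)"
  unfolding EK_def by simp

lemma EK_mono: "r \<le> r' \<Longrightarrow> EK r M G \<subseteq> EK r' M G"
  unfolding EK_def by (rule span_mono) force

lemma mpow_int_mult_in_EK:
  "j \<in> {- int m..int m - 1} \<Longrightarrow> (mpow_int M j ** G) *v x \<in> EK m M G"
  unfolding EK_def mrange_def by (rule span_base) blast

lemma EK_subsetI:
  assumes "subspace V" and "\<And>j x. j \<in> {- int m..int m - 1} \<Longrightarrow> (mpow_int M j ** G) *v x \<in> V"
  shows "EK m M G \<subseteq> V"
  unfolding EK_def mrange_def using assms by (intro span_minimal) auto

lemma matrix_vector_mul_EK:
  fixes A :: "real^'n^'n" and G :: "real^'s^'n"
  assumes "invertible A" and "v \<in> EK r A G"
  shows "A *v v \<in> EK (Suc r) A G"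
proof -
  have "EK r A G \<subseteq> (*v) A -` EK (Suc r) A G"
  proof (rule EK_subsetI)
    show "subspace ((*v) A -` EK (Suc r) A G)"
      by (rule linear_subspace_vimage[OF matrix_vector_mul_linear subspace_EK])
  next
    fix j x assume "j \<in> {- int r..int r - 1}"
    then have "(mpow_int A (j + 1) ** G) *v x \<in> EK (Suc r) A G"
      by (intro mpow_int_mult_in_EK) auto
    then show "(mpow_int A j ** G) *v x \<in> (*v) A -` EK (Suc r) A G"
      by (simp add: matrix_vector_mul_assoc matrix_mul_assoc matrix_mul_mpow_int[OF assms(1)])
  qed
  with assms(2) show ?thesis by blast
qed

lemma matrix_inv_vector_mul_EK:
  fixes A :: "real^'n^'n" and G :: "real^'s^'n"
  assumes "invertible A" and "v \<in> EK r A G"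
  shows "matrix_inv A *v v \<in> EK (Suc r) A G"
proof -
  have "EK r A G \<subseteq> (*v) (matrix_inv A) -` EK (Suc r) A G"
  proof (rule EK_subsetI)
    show "subspace ((*v) (matrix_inv A) -` EK (Suc r) A G)"
      by (rule linear_subspace_vimage[OF matrix_vector_mul_linear subspace_EK])
  next
    fix j x assume "j \<in> {- int r..int r - 1}"
    then have "(mpow_int A (j - 1) ** G) *v x \<in> EK (Suc r) A G"
      by (intro mpow_int_mult_in_EK) auto
    then show "(mpow_int A j ** G) *v x \<in> (*v) (matrix_inv A) -` EK (Suc r) A G"
      by (simp add: matrix_vector_mul_assoc matrix_mul_assoc matrix_inv_mul_mpow_int[OF assms(1)])
  qed
  with assms(2) show ?thesis by blast
qed

lemma EK_subset_of_shift:
  fixes K :: "real^'n^'n" and G :: "real^'s^'n" and V :: "nat \<Rightarrow> (real^'n) set"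
  assumes subspace: "\<And>r. subspace (V r)" and "mono V"
    and start: "\<And>x. G *v x \<in> V s"
    and shift: "\<And>r v. s \<le> r \<Longrightarrow> v \<in> V r \<Longrightarrow> K *v v \<in> V (Suc r) \<and> matrix_inv K *v v \<in> V (Suc r)"
  shows "EK m K G \<subseteq> V (s + m)"
proof -
  have powers: "(mpow K d ** G) *v x \<in> V (s + d) \<and> (mpow (matrix_inv K) d ** G) *v x \<in> V (s + d)"
    for d x
  proof (induction d)
    case 0
    then show ?case using start by simp
  next
    case (Suc d)
    have "(mpow K (Suc d) ** G) *v x = K *v ((mpow K d ** G) *v x)"
      and "(mpow (matrix_inv K) (Suc d) ** G) *v x
         = matrix_inv K *v ((mpow (matrix_inv K) d ** G) *v x)"
      by (simp_all add: matrix_vector_mul_assoc matrix_mul_assoc)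
    with Suc shift[of "s + d"] show ?case by simp
  qed
  show ?thesis
  proof (rule EK_subsetI[OF subspace])
    fix j x assume j: "j \<in> {- int m..int m - 1}"
    have "V (s + nat \<bar>j\<bar>) \<subseteq> V (s + m)"
      using j by (intro monoD[OF \<open>mono V\<close>]) auto
    with powers[of "nat \<bar>j\<bar>" x] show "(mpow_int K j ** G) *v x \<in> V (s + m)"
      by (auto simp: mpow_int_def)
  qed
qed

lemma update_vector_mul_EK:
  fixes A :: "real^'n^'n" and F :: "real^'p^'n" and N :: "real^'n^'p" and Ct :: "real^'q^'n"
  assumes "invertible A" and "invertible (A - F ** N)"
    and F: "mrange F \<subseteq> EK s A Ct" and "s \<le> r" and v: "v \<in> EK r A Ct"
  shows "(A - F ** N) *v v \<in> EK (Suc r) A Ct \<and> matrix_inv (A - F ** N) *v v \<in> EK (Suc r) A Ct"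
proof
  have F_in: "F *v y \<in> EK r' A Ct" if "s \<le> r'" for y r'
    using F EK_mono[OF that] unfolding mrange_def by blast
  have split: "(A - F ** N) *v y = A *v y - F *v (N *v y)" for y
    by (simp add: matrix_vector_mult_diff_rdistrib matrix_vector_mul_assoc)
  show "(A - F ** N) *v v \<in> EK (Suc r) A Ct"
    unfolding split using \<open>s \<le> r\<close>
    by (intro subspace_diff[OF subspace_EK] matrix_vector_mul_EK[OF \<open>invertible A\<close> v] F_in) simp
  define y where "y = matrix_inv (A - F ** N) *v v"
  have "(A - F ** N) *v y = v"
    using matrix_inv_inverse[OF assms(2)] by (simp add: y_def matrix_vector_mul_assoc)
  then have "A *v y = v + F *v (N *v y)"
    unfolding split by (simp add: algebra_simps)
  then have "A *v y \<in> EK r A Ct"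
    using \<open>s \<le> r\<close> by (simp add: subspace_add[OF subspace_EK] v F_in)
  then have "matrix_inv A *v (A *v y) \<in> EK (Suc r) A Ct"
    by (rule matrix_inv_vector_mul_EK[OF \<open>invertible A\<close>])
  moreover have "matrix_inv A *v (A *v y) = y"
    using matrix_inv_inverse[OF \<open>invertible A\<close>] by (simp add: matrix_vector_mul_assoc)
  ultimately show "matrix_inv (A - F ** N) *v v \<in> EK (Suc r) A Ct"
    by (simp add: y_def)
qed

lemma EK_update_subset:
  fixes A :: "real^'n^'n" and F :: "real^'p^'n" and N :: "real^'n^'p" and Ct :: "real^'q^'n"
  assumes "invertible A" and "invertible (A - F ** N)"
    and F: "mrange F \<subseteq> EK s A Ct" and "1 \<le> s"
  shows "EK m (A - F ** N) (hcat Ct F) \<subseteq> EK (s + m) A Ct"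
proof (rule EK_subset_of_shift)
  show "mono (\<lambda>r. EK r A Ct)"
    by (rule monoI) (rule EK_mono)
  fix x
  have "Ct *v z \<in> EK 1 A Ct" for z
    using mpow_int_mult_in_EK[of 0 1 A Ct z] by (simp add: mpow_int_def)
  then have "Ct *v z \<in> EK s A Ct" for z
    using EK_mono[OF \<open>1 \<le> s\<close>] by blast
  moreover have "F *v z \<in> EK s A Ct" for z
    using F unfolding mrange_def by blast
  ultimately show "hcat Ct F *v x \<in> EK s A Ct"
    unfolding matrix_vector_mult_hcat by (simp add: subspace_add[OF subspace_EK])
qed (use update_vector_mul_EK[OF assms(1,2) F] subspace_EK in auto)

theorem theorem1:
  fixes A :: "real^'n^'n" and B :: "real^'p^'n" and C :: "real^'n^'q"
    and X :: "nat \<Rightarrow> real^'n^'n"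
    and W :: "nat \<Rightarrow> (real^'n) list"
    and Y :: "nat \<Rightarrow> nat \<Rightarrow> nat \<Rightarrow> real"
    and m :: "nat \<Rightarrow> nat"
  assumes "invertible A"
    and "X 0 = 0"
    and "\<And>k. invertible (A - X k ** B ** transpose B)"
    and "\<And>k. m (Suc k) \<ge> 1"
    and "\<And>k. orthonormal_basis_of (W (Suc k))
               (EK (m (Suc k)) (A - X k ** B ** transpose B) (hcat (transpose C) (X k ** B)))"
    and "\<And>k. X (Suc k) = WYWt (W (Suc k)) (Y (Suc k))"
  shows "\<forall>k. \<exists>mb::nat. mb \<le> (\<Sum>j=1..k+1. m j) + 2 \<and>
           mrange (X (k+1)) \<subseteq> EK mb A (transpose C)"
proof -
  have range_X: "mrange (X k) \<subseteq> EK (1 + (\<Sum>j=1..k. m j)) A (transpose C)" for k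
  proof (induction k)
    case 0
    then show ?case using \<open>X 0 = 0\<close> by (simp add: mrange_def subspace_0[OF subspace_EK])
  next
    case (Suc k)
    have "mrange (X k ** B) \<subseteq> EK (1 + (\<Sum>j=1..k. m j)) A (transpose C)"
      using mrange_matrix_mul_subset Suc.IH by blast
    note step = EK_update_subset[OF \<open>invertible A\<close> assms(3) this, of "m (Suc k)"]
    have "mrange (X (Suc k)) \<subseteq> span (set (W (Suc k)))"
      unfolding assms(6) by (rule mrange_WYWt_subset_span)
    also have "\<dots> \<subseteq> EK (1 + (\<Sum>j=1..Suc k. m j)) A (transpose C)"
      using assms(5)[of k] step by (simp add: orthonormal_basis_of_def add.assoc)
    finally show ?case .
  qed
  show ?thesis
  proof
    fix k
    show "\<exists>mb::nat. mb \<le> (\<Sum>j=1..k+1. m j) + 2 \<and> mrange (X (k+1)) \<subseteq> EK mb A (transpose C)"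
      using range_X[of "k + 1"] by (intro exI[of _ "1 + (\<Sum>j=1..k+1. m j)"]) simp
  qed
qed

end
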